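(* In the setting of the context, let $\theta^*>0$ be the optimal throughput and define $$J_{\theta^*}(x,0)=(1-\tau)\int_{(\theta^*,\infty)}(y-\theta^* )\,G(dy\mid x)-\theta^*\tau,\qquad q(x)=J_{\theta^*}(x,0)-x+\theta^*,\qquad x\ge 0.$$ Then: (i) $J_{\theta^*}(x,0)$ is monotonically increasing in $x$ with $\lim_{x\to\infty}J_{\theta^*}(x,0)=\infty$, and $\lim_{x\to 0}J_{\theta^*}(x,0)<0$ when $\frac{R_e}{\theta^*}e^{-\theta^*/R_e}<\frac{\tau}{1-\tau}$. (ii) If $c_r<\frac{1}{1-\tau}$, then $q(x)$ is monotonically decreasing in $x$, $\lim_{x\to0}q(x)>0$ and $\lim_{x\to\infty}q(x)=-\infty$.
   Context: Setting (distributed opportunistic scheduling with two-level probing). Fix $p_s\in(0,1)$, $\tau\in(0,1)$, and normalize the data transmission duration to $1$. Let $K_1,K_2,\dots$ be i.i.d. geometric on $\{1,2,\dots\}$ with parameter $p_s$. Let $(R_n^{(1)},R_n^{(2)})$, $n\ge1$, be i.i.d. pairs independent of $(K_j)$, with $R_n^{(1)}$ exponential with mean $E[R^{(1)}]>0$, and conditionally on $R_n^{(1)}=x$, $R_n^{(2)}$ distributed as $|\sqrt{c_rx}+z|^2$ with constants $c_r>0$, $R_e>0$ and $z$ circularly symmetric complex Gaussian with $E|z|^2=R_e$; $G(y\mid x)$ denotes this conditional cdf. A policy: in round $n$ (reached after contention time $\sum_{j\le n}K_j\tau$) the link observes $R_n^{(1)}$ and either transmits at rate $R_n^{(1)}$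 for duration $1$, or skips to round $n+1$, or performs second-level probing (time cost $\tau$), observes $R_n^{(2)}$, and then either transmits at rate $R_n^{(2)}$ for duration $1-\tau$ or skips to round $n+1$. With $N$ the round of transmission, $R_N$ the rate used, $T_{d,N}\in\{1,1-\tau\}$ the transmission duration and $T_N$ the total elapsed time (contention times, second-level probing times, and the final transmission period of total length 1), the optimal throughput is $\theta^*=\sup_N E[R_NT_{d,N}]/E[T_N]$ over stopping rules with $N\ge1$, $E[T_N]<\infty$. *)

theory Defs
  imports "HOL-Probability.Probability"
begin

text \<open>Circularly symmetric complex Gaussian z with E|z|^2 = Rn (the paper R_e): density
  exp(-|z|^2/Rn)/(pi Rn) with respect to Lebesgue measure on the complex plane.\<close>
definition cscg :: "real \<Rightarrow> complex measure" where
  "cscg Rn = density lborel (\<lambda>z. ennreal (exp (- (cmod z)\<^sup>2 / Rn) / (pi * Rn)))"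

text \<open>G(. | x): the conditional law of R2 given R1 = x, i.e. the law of |sqrt(c_r x) + z|^2.\<close>
definition G_law :: "real \<Rightarrow> real \<Rightarrow> real \<Rightarrow> real measure" where
  "G_law cr Rn x = distr (cscg Rn) borel (\<lambda>z. (cmod (complex_of_real (sqrt (cr * x)) + z))\<^sup>2)"

definition J0 :: "real \<Rightarrow> real \<Rightarrow> real \<Rightarrow> real \<Rightarrow> real \<Rightarrow> real" where
  "J0 tau cr Rn \<theta> x = (1 - tau) * (LINT y:{\<theta><..}|G_law cr Rn x. (y - \<theta>)) - \<theta> * tau"

definition q_fun :: "real \<Rightarrow> real \<Rightarrow> real \<Rightarrow> real \<Rightarrow> real \<Rightarrow> real" where
  "q_fun tau cr Rn \<theta> x = J0 tau cr Rn \<theta> x - x + \<theta>"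

end

theory Submission
  imports Defs "HOL-Real_Asymp.Real_Asymp"
begin

text \<open>Write \<open>J(x) = (1 - \<tau>) F(\<surd>(c\<^sub>r x)) - \<theta> \<tau>\<close> with \<open>F(c) = E (|c + z|\<^sup>2 - \<theta>)\<^sup>+\<close>.
  Polar coordinates give \<open>F(0) = R\<^sub>e exp (-\<theta>/R\<^sub>e)\<close>. For \<open>0 \<le> a \<le> b\<close> and nondecreasing \<open>\<phi>\<close>,
  \<open>E \<phi>(|a + z|\<^sup>2) \<le> E \<phi>(|b + z|\<^sup>2)\<close>: the reflection of the plane in the line \<open>Re w = (a + b)/2\<close>
  swaps the two shifted Gaussian densities, and the difference of the expectations becomes the
  integral of a pointwise nonnegative product. Applied to \<open>\<phi> = (\<cdot> - \<theta>)\<^sup>+\<close> this makes \<open>F\<close> nondecreasing;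
  applied to \<open>\<phi> = min \<cdot> \<theta>\<close>, together with \<open>(y - \<theta>)\<^sup>+ = y - min y \<theta>\<close> and
  \<open>E |c + z|\<^sup>2 = c\<^sup>2 + E |z|\<^sup>2\<close>, it gives \<open>F(b) - F(a) \<le> b\<^sup>2 - a\<^sup>2\<close>; and \<open>F(c) \<ge> c\<^sup>2 - \<theta>\<close>.
  Hence \<open>J\<close> is nondecreasing, its increments are at most \<open>(1 - \<tau>) c\<^sub>r\<close> times those of \<open>x\<close>, and
  \<open>J(x) \<ge> (1 - \<tau>)(c\<^sub>r x - \<theta>) - \<theta> \<tau>\<close>, which gives (i); when \<open>(1 - \<tau>) c\<^sub>r < 1\<close> the increments of
  \<open>q = J - id + \<theta>\<close> are at most \<open>(1 - \<tau>) c\<^sub>r - 1 < 0\<close> times those of \<open>x\<close>, which gives (ii).\<close>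

section \<open>Lebesgue measure on the complex plane\<close>

lemma Complex_pair_measurable:
  "(\<lambda>(x, y). Complex x y) \<in> borel_measurable (lborel \<Otimes>\<^sub>M lborel)"
proof -
  have "(\<lambda>(x, y). Complex x y) = (\<lambda>p. complex_of_real (fst p) + \<i> * complex_of_real (snd p))"
    by (auto simp: complex_eq_iff)
  then show ?thesis by simp
qed

lemma distr_Complex_lborel:
  "distr (lborel \<Otimes>\<^sub>M lborel) borel (\<lambda>(x, y). Complex x y) = (lborel :: complex measure)"
proof (rule lborel_eqI[symmetric])
  fix l u :: complex
  assume le: "\<And>b. b \<in> Basis \<Longrightarrow> l \<bullet> b \<le> u \<bullet> b"
  then have "Re l \<le> Re u" "Im l \<le> Im u"
    using le[of 1] le[of \<i>] by (auto simp: inner_complex_def)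
  moreover have "(\<lambda>(x, y). Complex x y) -` box l u \<inter> space (lborel \<Otimes>\<^sub>M lborel)
      = {Re l<..<Re u} \<times> {Im l<..<Im u}"
    by (auto simp: box_def Basis_complex_def inner_complex_def space_pair_measure)
  ultimately show "emeasure (distr (lborel \<Otimes>\<^sub>M lborel) borel (\<lambda>(x, y). Complex x y)) (box l u)
      = (\<Prod>b\<in>Basis. (u - l) \<bullet> b)"
    using Complex_pair_measurable
    by (simp add: emeasure_distr lborel.emeasure_pair_measure_Times Basis_complex_def
        inner_complex_def ennreal_mult)
qed simp

lemma nn_integral_lborel_complex:
  fixes h :: "complex \<Rightarrow> ennreal"
  assumes [measurable]: "h \<in> borel_measurable borel"
  shows "(\<integral>\<^sup>+z. h z \<partial>lborel) = (\<integral>\<^sup>+x. \<integral>\<^sup>+y. h (Complex x y) \<partial>lborel \<partial>lborel)"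
proof -
  note m = Complex_pair_measurable
  have "(\<integral>\<^sup>+z. h z \<partial>lborel) = (\<integral>\<^sup>+z. h z \<partial>distr (lborel \<Otimes>\<^sub>M lborel) borel (\<lambda>(x, y). Complex x y))"
    by (simp add: distr_Complex_lborel)
  also have "\<dots> = (\<integral>\<^sup>+p. h (case p of (x, y) \<Rightarrow> Complex x y) \<partial>(lborel \<Otimes>\<^sub>M lborel))"
    by (rule nn_integral_distr[OF m]) simp
  also have "\<dots> = (\<integral>\<^sup>+x. \<integral>\<^sup>+y. h (Complex x y) \<partial>lborel \<partial>lborel)"
    by (subst lborel.nn_integral_fst[symmetric]) (use m in \<open>auto simp: case_prod_beta\<close>)
  finally show ?thesis .
qed

lemma distr_lborel_reflect_complex:
  fixes t :: complex
  shows "distr lborel borel (\<lambda>w. t - cnj w) = (lborel :: complex measure)"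
proof -
  define c :: "complex \<Rightarrow> real" where "c = (\<lambda>j. if j = 1 then -1 else 1)"
  have "(\<lambda>x. t + (\<Sum>j\<in>Basis. (c j * (x \<bullet> j)) *\<^sub>R j)) = (\<lambda>w. t - cnj w)"
    by (rule ext) (simp add: Basis_complex_def c_def complex_eq_iff inner_complex_def)
  moreover have "(\<Prod>j\<in>(Basis::complex set). \<bar>c j\<bar>) = 1"
    by (simp add: Basis_complex_def c_def)
  ultimately show ?thesis
    using lborel_affine_euclidean[where c=c and t=t] by (simp add: c_def density_1)
qed

lemma
  fixes g :: "complex \<Rightarrow> real" and t :: complex
  assumes [measurable]: "g \<in> borel_measurable borel"
  shows integrable_lborel_reflect_complex:
      "integrable lborel g \<longleftrightarrow> integrable lborel (\<lambda>w. g (t - cnj w))"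
    and integral_lborel_reflect_complex:
      "(\<integral>w. g w \<partial>lborel) = (\<integral>w. g (t - cnj w) \<partial>lborel)"
proof -
  have [measurable]: "cnj \<in> borel_measurable borel"
    by (intro borel_measurable_continuous_onI continuous_intros)
  have m: "(\<lambda>w. t - cnj w) \<in> measurable lborel borel"
    by measurable
  show "integrable lborel g \<longleftrightarrow> integrable lborel (\<lambda>w. g (t - cnj w))"
    using integrable_distr_eq[OF m, of g] by (simp add: distr_lborel_reflect_complex)
  show "(\<integral>w. g w \<partial>lborel) = (\<integral>w. g (t - cnj w) \<partial>lborel)"
    using integral_distr[OF m, of g] by (simp add: distr_lborel_reflect_complex)
qed

section \<open>Radial integrals in the plane\<close>

lemma nn_integral_lborel_even:
  fixes g :: "real \<Rightarrow> ennreal"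
  assumes [measurable]: "g \<in> borel_measurable borel" and even: "\<And>x. g (- x) = g x"
  shows "(\<integral>\<^sup>+x. g x \<partial>lborel) = 2 * (\<integral>\<^sup>+x. g x * indicator {0..} x \<partial>lborel)"
proof -
  have "(\<integral>\<^sup>+x. g x \<partial>lborel) = (\<integral>\<^sup>+x. g x * indicator {0..} x + g x * indicator {..<0} x \<partial>lborel)"
    by (intro nn_integral_cong) (auto split: split_indicator)
  also have "\<dots> = (\<integral>\<^sup>+x. g x * indicator {0..} x \<partial>lborel) + (\<integral>\<^sup>+x. g x * indicator {..<0} x \<partial>lborel)"
    by (rule nn_integral_add) auto
  also have "(\<integral>\<^sup>+x. g x * indicator {..<0} x \<partial>lborel)
      = (\<integral>\<^sup>+x. g (0 + (-1) * x) * indicator {..<0} (0 + (-1) * x) \<partial>lborel)"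
    using nn_integral_real_affine[where c="-1" and t=0 and f="\<lambda>x. g x * indicator {..<0} x"] by simp
  also have "\<dots> = (\<integral>\<^sup>+x. g x * indicator {0..} x \<partial>lborel)"
    using AE_lborel_singleton[of 0]
    by (intro nn_integral_cong_AE, eventually_elim) (auto simp: even split: split_indicator)
  finally show ?thesis by (simp add: mult_2)
qed

lemma nn_integral_inverse_1_plus_square:
  "(\<integral>\<^sup>+s. ennreal (1 / (1 + s\<^sup>2)) \<partial>lborel) = ennreal pi"
proof -
  have "(\<integral>\<^sup>+s. ennreal (1 / (1 + s\<^sup>2)) * indicator {0..} s \<partial>lborel) = ennreal (pi / 2 - arctan 0)"
    by (rule nn_integral_FTC_atLeast[OF _ _ _ tendsto_arctan_at_top])
       (auto intro!: derivative_eq_intros simp: add_nonneg_eq_0_iff field_simps power2_eq_square)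
  moreover have "ennreal pi = 2 * ennreal (pi / 2)"
    using ennreal_mult[of 2 "pi/2"] by simp
  ultimately show ?thesis
    by (subst nn_integral_lborel_even) (auto simp: ennreal_mult[symmetric])
qed

lemma nn_integral_radial_scale:
  fixes f :: "real \<Rightarrow> ennreal" and k :: real
  assumes [measurable]: "f \<in> borel_measurable borel" and k: "0 < k"
  shows "(\<integral>\<^sup>+x. ennreal x * f (k * x\<^sup>2) * indicator {0..} x \<partial>lborel)
       = ennreal (1 / k) * (\<integral>\<^sup>+r. ennreal r * f (r\<^sup>2) * indicator {0..} r \<partial>lborel)"
proof -
  have sk: "0 < sqrt k" using k by simp
  have "(\<integral>\<^sup>+r. ennreal r * f (r\<^sup>2) * indicator {0..} r \<partial>lborel)
      = ennreal (sqrt k) * (\<integral>\<^sup>+x. ennreal (0 + sqrt k * x) * f ((0 + sqrt k * x)\<^sup>2)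
          * indicator {0..} (0 + sqrt k * x) \<partial>lborel)"
    using nn_integral_real_affine[where c="sqrt k" and t=0 and f="\<lambda>r. ennreal r * f (r\<^sup>2) * indicator {0..} r"] sk
    by simp
  also have "\<dots> = ennreal k * (\<integral>\<^sup>+x. ennreal x * f (k * x\<^sup>2) * indicator {0..} x \<partial>lborel)"
  proof (subst nn_integral_cmult[symmetric], simp, subst nn_integral_cmult[symmetric], simp,
      intro nn_integral_cong)
    fix x :: real
    show "ennreal (sqrt k) * (ennreal (0 + sqrt k * x) * f ((0 + sqrt k * x)\<^sup>2)
          * indicator {0..} (0 + sqrt k * x))
        = ennreal k * (ennreal x * f (k * x\<^sup>2) * indicator {0..} x)"
    proof (cases "0 \<le> x")
      case True
      then have "ennreal (sqrt k) * ennreal (sqrt k * x) = ennreal k * ennreal x"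
        using sk by (simp add: ennreal_mult[symmetric] mult.assoc[symmetric])
      then show ?thesis
        using True sk by (simp add: power_mult_distrib mult.assoc[symmetric])
    qed (use sk in \<open>simp add: zero_le_mult_iff\<close>)
  qed
  finally show ?thesis
    using k by (simp add: ennreal_mult[symmetric] mult.assoc[symmetric] divide_simps)
qed

lemma nn_integral_radial_plane:
  fixes f :: "real \<Rightarrow> ennreal"
  assumes [measurable]: "f \<in> borel_measurable borel"
  shows "(\<integral>\<^sup>+x. \<integral>\<^sup>+y. f (x\<^sup>2 + y\<^sup>2) \<partial>lborel \<partial>lborel)
       = ennreal (2 * pi) * (\<integral>\<^sup>+r. ennreal r * f (r\<^sup>2) * indicator {0..} r \<partial>lborel)"
proof -
  define I where "I = (\<integral>\<^sup>+r. ennreal r * f (r\<^sup>2) * indicator {0..} r \<partial>lborel)"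
  have "(\<integral>\<^sup>+x. \<integral>\<^sup>+y. f (x\<^sup>2 + y\<^sup>2) \<partial>lborel \<partial>lborel)
      = (\<integral>\<^sup>+x. \<integral>\<^sup>+s. ennreal \<bar>x\<bar> * f (x\<^sup>2 * (1 + s\<^sup>2)) \<partial>lborel \<partial>lborel)"
  proof (rule nn_integral_cong_AE)
    show "AE x in lborel. (\<integral>\<^sup>+y. f (x\<^sup>2 + y\<^sup>2) \<partial>lborel)
        = (\<integral>\<^sup>+s. ennreal \<bar>x\<bar> * f (x\<^sup>2 * (1 + s\<^sup>2)) \<partial>lborel)"
      using AE_lborel_singleton[of 0]
    proof eventually_elim
      case (elim x)
      then show ?case
        by (subst nn_integral_real_affine[where c=x and t=0])
           (auto simp: nn_integral_cmult power_mult_distrib algebra_simps)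
    qed
  qed
  also have "\<dots> = (\<integral>\<^sup>+s. \<integral>\<^sup>+x. ennreal \<bar>x\<bar> * f (x\<^sup>2 * (1 + s\<^sup>2)) \<partial>lborel \<partial>lborel)"
    by (rule lborel_pair.Fubini') measurable
  also have "\<dots> = (\<integral>\<^sup>+s. (2 * I) * ennreal (1 / (1 + s\<^sup>2)) \<partial>lborel)"
  proof (rule nn_integral_cong)
    fix s :: real
    have k: "0 < 1 + s\<^sup>2" by (simp add: add_pos_nonneg)
    have "(\<integral>\<^sup>+x. ennreal \<bar>x\<bar> * f (x\<^sup>2 * (1 + s\<^sup>2)) \<partial>lborel)
        = 2 * (\<integral>\<^sup>+x. ennreal \<bar>x\<bar> * f (x\<^sup>2 * (1 + s\<^sup>2)) * indicator {0..} x \<partial>lborel)"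
      by (rule nn_integral_lborel_even) auto
    also have "(\<integral>\<^sup>+x. ennreal \<bar>x\<bar> * f (x\<^sup>2 * (1 + s\<^sup>2)) * indicator {0..} x \<partial>lborel)
        = (\<integral>\<^sup>+x. ennreal x * f ((1 + s\<^sup>2) * x\<^sup>2) * indicator {0..} x \<partial>lborel)"
      by (intro nn_integral_cong) (auto simp: mult.commute split: split_indicator)
    also have "\<dots> = ennreal (1 / (1 + s\<^sup>2)) * I"
      unfolding I_def by (rule nn_integral_radial_scale[OF _ k]) simp
    finally show "(\<integral>\<^sup>+x. ennreal \<bar>x\<bar> * f (x\<^sup>2 * (1 + s\<^sup>2)) \<partial>lborel)
        = (2 * I) * ennreal (1 / (1 + s\<^sup>2))"
      by (simp add: ac_simps)
  qed
  also have "\<dots> = 2 * I * ennreal pi"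
    by (simp add: nn_integral_cmult nn_integral_inverse_1_plus_square)
  also have "\<dots> = ennreal (2 * pi) * I"
    by (simp add: ennreal_mult ac_simps)
  finally show ?thesis unfolding I_def .
qed

section \<open>The circularly symmetric Gaussian\<close>

definition cscg_density :: "real \<Rightarrow> complex \<Rightarrow> real" where
  "cscg_density Rn z = exp (- (cmod z)\<^sup>2 / Rn) / (pi * Rn)"

lemma cscg_density_measurable [measurable]: "cscg_density Rn \<in> borel_measurable borel"
  unfolding cscg_density_def by measurable

lemma cscg_density_nonneg: "0 < Rn \<Longrightarrow> 0 \<le> cscg_density Rn z"
  by (simp add: cscg_density_def)

lemma cscg_eq_density: "cscg Rn = density lborel (\<lambda>z. ennreal (cscg_density Rn z))"
  by (simp add: cscg_def cscg_density_def)

lemma sets_cscg [measurable_cong, simp]: "sets (cscg Rn) = sets borel"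
  by (simp add: cscg_def)

lemma cscg_density_le_iff:
  "0 < Rn \<Longrightarrow> cscg_density Rn u \<le> cscg_density Rn v \<longleftrightarrow> (cmod v)\<^sup>2 \<le> (cmod u)\<^sup>2"
  by (simp add: cscg_density_def divide_le_cancel) (meson less_asym mult_pos_pos pi_gt_zero)

lemma nn_integral_cscg_radial:
  fixes g :: "real \<Rightarrow> real"
  assumes Rn: "0 < Rn" and [measurable]: "g \<in> borel_measurable borel" and g: "\<And>y. 0 \<le> g y"
  shows "(\<integral>\<^sup>+z. ennreal (g ((cmod z)\<^sup>2)) \<partial>cscg Rn)
       = ennreal (2 * pi) * (\<integral>\<^sup>+r. ennreal r * ennreal (g (r\<^sup>2) * exp (- r\<^sup>2 / Rn) / (pi * Rn))
           * indicator {0..} r \<partial>lborel)"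
proof -
  have "(\<integral>\<^sup>+z. ennreal (g ((cmod z)\<^sup>2)) \<partial>cscg Rn)
      = (\<integral>\<^sup>+z. ennreal (g ((cmod z)\<^sup>2) * cscg_density Rn z) \<partial>lborel)"
    using Rn g by (simp add: cscg_eq_density nn_integral_density ennreal_mult[symmetric]
        cscg_density_nonneg mult.commute)
  also have "\<dots> = (\<integral>\<^sup>+x. \<integral>\<^sup>+y. ennreal (g (x\<^sup>2 + y\<^sup>2) * exp (- (x\<^sup>2 + y\<^sup>2) / Rn) / (pi * Rn))
      \<partial>lborel \<partial>lborel)"
    by (subst nn_integral_lborel_complex) (auto simp: cscg_density_def cmod_power2)
  also have "\<dots> = ennreal (2 * pi) * (\<integral>\<^sup>+r. ennreal r * ennreal (g (r\<^sup>2) * exp (- r\<^sup>2 / Rn) / (pi * Rn))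
      * indicator {0..} r \<partial>lborel)"
    by (rule nn_integral_radial_plane[where f="\<lambda>u. ennreal (g u * exp (- u / Rn) / (pi * Rn))"]) simp
  finally show ?thesis .
qed

lemma nn_integral_gauss_radial:
  assumes Rn: "0 < Rn"
  shows "(\<integral>\<^sup>+r. ennreal r * ennreal (exp (- r\<^sup>2 / Rn) / (pi * Rn)) * indicator {0..} r \<partial>lborel)
       = ennreal (1 / (2 * pi))"
proof -
  have "(\<integral>\<^sup>+r. ennreal r * ennreal (exp (- r\<^sup>2 / Rn) / (pi * Rn)) * indicator {0..} r \<partial>lborel)
      = (\<integral>\<^sup>+r. ennreal (r * exp (- r\<^sup>2 / Rn) / (pi * Rn)) * indicator {0..} r \<partial>lborel)"
    by (intro nn_integral_cong) (auto split: split_indicator simp: ennreal_mult'[symmetric])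
  also have "\<dots> = ennreal (0 - (- exp (- 0\<^sup>2 / Rn) / (2 * pi)))"
  proof (rule nn_integral_FTC_atLeast)
    show "((\<lambda>r. - exp (- r\<^sup>2 / Rn) / (2 * pi)) \<longlongrightarrow> 0) at_top"
      using Rn by real_asymp
    show "((\<lambda>r. - exp (- r\<^sup>2 / Rn) / (2 * pi)) has_real_derivative r * exp (- r\<^sup>2 / Rn) / (pi * Rn)) (at r)"
      for r :: real
      using Rn by (auto intro!: derivative_eq_intros simp: field_simps power2_eq_square)
  qed (use Rn in simp_all)
  finally show ?thesis by simp
qed

lemma prob_space_cscg: "0 < Rn \<Longrightarrow> prob_space (cscg Rn)"
proof
  assume Rn: "0 < Rn"
  have "emeasure (cscg Rn) (space (cscg Rn)) = (\<integral>\<^sup>+z. ennreal ((\<lambda>_. 1) ((cmod z)\<^sup>2)) \<partial>cscg Rn)"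
    by simp
  also have "\<dots> = ennreal (2 * pi) * ennreal (1 / (2 * pi))"
    using nn_integral_cscg_radial[OF Rn, of "\<lambda>_. 1"] nn_integral_gauss_radial[OF Rn] by simp
  also have "\<dots> = 1"
    by (simp add: ennreal_mult[symmetric])
  finally show "emeasure (cscg Rn) (space (cscg Rn)) = 1" .
qed

definition excess :: "real \<Rightarrow> real \<Rightarrow> real" where
  "excess \<theta> y = indicator {\<theta><..} y * (y - \<theta>)"

lemma excess_measurable [measurable]: "excess \<theta> \<in> borel_measurable borel"
  unfolding excess_def by measurable

lemma excess_nonneg: "0 \<le> excess \<theta> y"
  by (simp add: excess_def indicator_def)

lemma mono_excess: "mono (excess \<theta>)"
  by (rule monoI) (auto simp: excess_def indicator_def)

lemma excess_eq_diff_min: "excess \<theta> y = y - min y \<theta>"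
  by (auto simp: excess_def indicator_def)

lemma nn_integral_gauss_radial_excess:
  assumes Rn: "0 < Rn" and \<theta>: "0 < \<theta>"
  shows "(\<integral>\<^sup>+r. ennreal r * ennreal (excess \<theta> (r\<^sup>2) * exp (- r\<^sup>2 / Rn) / (pi * Rn)) * indicator {0..} r \<partial>lborel)
       = ennreal (Rn * exp (- \<theta> / Rn) / (2 * pi))"
proof -
  define F where "F r = - (r\<^sup>2 - \<theta> + Rn) * exp (- r\<^sup>2 / Rn) / (2 * pi)" for r :: real
  have above: "\<theta> < r\<^sup>2 \<longleftrightarrow> sqrt \<theta> < r" if "0 \<le> r" for r :: real
    using that real_sqrt_less_iff[of \<theta> "r\<^sup>2"] by simp
  have "(\<integral>\<^sup>+r. ennreal r * ennreal (excess \<theta> (r\<^sup>2) * exp (- r\<^sup>2 / Rn) / (pi * Rn)) * indicator {0..} r \<partial>lborel)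
      = (\<integral>\<^sup>+r. ennreal (r * (r\<^sup>2 - \<theta>) * exp (- r\<^sup>2 / Rn) / (pi * Rn)) * indicator {sqrt \<theta>..} r \<partial>lborel)"
  proof (intro nn_integral_cong)
    fix r :: real
    show "ennreal r * ennreal (excess \<theta> (r\<^sup>2) * exp (- r\<^sup>2 / Rn) / (pi * Rn)) * indicator {0..} r
        = ennreal (r * (r\<^sup>2 - \<theta>) * exp (- r\<^sup>2 / Rn) / (pi * Rn)) * indicator {sqrt \<theta>..} r"
    proof (cases "sqrt \<theta> < r")
      case True
      then have "0 \<le> r"
        using \<theta> real_sqrt_gt_zero[of \<theta>] by linarith
      with True have "\<theta> < r\<^sup>2"
        using above by simp
      then show ?thesis
        using True \<open>0 \<le> r\<close> by (simp add: excess_def ennreal_mult'[symmetric] mult.assoc)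
    next
      case False
      then have "r < 0 \<or> excess \<theta> (r\<^sup>2) = 0 \<and> (r * (r\<^sup>2 - \<theta>) = 0 \<or> r < sqrt \<theta>)"
        using above \<theta> by (cases "0 \<le> r") (auto simp: excess_def)
      then show ?thesis
        using False \<theta> by (auto simp: indicator_def)
    qed
  qed
  also have "\<dots> = ennreal (0 - F (sqrt \<theta>))"
  proof (rule nn_integral_FTC_atLeast)
    show "(F \<longlongrightarrow> 0) at_top"
      unfolding F_def using Rn by real_asymp
    show "(F has_real_derivative r * (r\<^sup>2 - \<theta>) * exp (- r\<^sup>2 / Rn) / (pi * Rn)) (at r)" for r
      unfolding F_def using Rn by (auto intro!: derivative_eq_intros simp: field_simps power2_eq_square)
    show "0 \<le> r * (r\<^sup>2 - \<theta>) * exp (- r\<^sup>2 / Rn) / (pi * Rn)" if "sqrt \<theta> \<le> r" for r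
    proof -
      have "0 \<le> r" using that \<theta> real_sqrt_gt_zero[of \<theta>] by linarith
      moreover have "\<theta> \<le> r\<^sup>2" using that \<theta> real_sqrt_le_iff[of \<theta> "r\<^sup>2"] \<open>0 \<le> r\<close> by simp
      ultimately show ?thesis using Rn by simp
    qed
  qed simp
  also have "0 - F (sqrt \<theta>) = Rn * exp (- \<theta> / Rn) / (2 * pi)"
    using \<theta> by (simp add: F_def)
  finally show ?thesis .
qed

lemma nn_integral_cscg_excess:
  assumes Rn: "0 < Rn" and \<theta>: "0 < \<theta>"
  shows "(\<integral>\<^sup>+z. ennreal (excess \<theta> ((cmod z)\<^sup>2)) \<partial>cscg Rn) = ennreal (Rn * exp (- \<theta> / Rn))"
  using nn_integral_cscg_radial[OF Rn excess_measurable excess_nonneg, of \<theta>]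
    nn_integral_gauss_radial_excess[OF Rn \<theta>] Rn
  by (simp add: ennreal_mult[symmetric])

section \<open>Stochastic monotonicity of the shifted modulus\<close>

lemma cscg_density_shift_reflect_nonneg:
  fixes a b :: real and w :: complex
  assumes Rn: "0 < Rn" and mono: "mono \<phi>" and ab: "0 \<le> a" "a \<le> b"
  shows "0 \<le> (cscg_density Rn (w - of_real b) - cscg_density Rn (w - of_real a)) *
              (\<phi> ((cmod w)\<^sup>2) - \<phi> ((cmod (of_real (a + b) - cnj w))\<^sup>2))"
proof -
  define x where "x = Re w"
  have sq: "(cmod w)\<^sup>2 = x\<^sup>2 + (Im w)\<^sup>2"
    "(cmod (of_real (a + b) - cnj w))\<^sup>2 = (a + b - x)\<^sup>2 + (Im w)\<^sup>2"
    "(cmod (w - of_real a))\<^sup>2 = (x - a)\<^sup>2 + (Im w)\<^sup>2"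
    "(cmod (w - of_real b))\<^sup>2 = (x - b)\<^sup>2 + (Im w)\<^sup>2"
    by (simp_all add: cmod_power2 x_def)
  txt \<open>Both factors have the sign of \<open>2 x - a - b\<close>.\<close>
  have d1: "(x - a)\<^sup>2 - (x - b)\<^sup>2 = (b - a) * (2 * x - a - b)"
    and d2: "x\<^sup>2 - (a + b - x)\<^sup>2 = (a + b) * (2 * x - a - b)"
    by (simp_all add: power2_eq_square algebra_simps)
  show ?thesis
  proof (cases "a + b \<le> 2 * x")
    case True
    then have "(x - b)\<^sup>2 \<le> (x - a)\<^sup>2" "(a + b - x)\<^sup>2 \<le> x\<^sup>2"
      using d1 d2 ab mult_nonneg_nonneg[of "b - a" "2 * x - a - b"]
        mult_nonneg_nonneg[of "a + b" "2 * x - a - b"] by linarith+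
    then have "cscg_density Rn (w - of_real a) \<le> cscg_density Rn (w - of_real b)"
      "\<phi> ((cmod (of_real (a + b) - cnj w))\<^sup>2) \<le> \<phi> ((cmod w)\<^sup>2)"
      unfolding cscg_density_le_iff[OF Rn] sq by (linarith, intro monoD[OF mono], linarith)
    then show ?thesis by simp
  next
    case False
    then have "(x - a)\<^sup>2 \<le> (x - b)\<^sup>2" "x\<^sup>2 \<le> (a + b - x)\<^sup>2"
      using d1 d2 ab mult_nonneg_nonpos[of "b - a" "2 * x - a - b"]
        mult_nonneg_nonpos[of "a + b" "2 * x - a - b"] by linarith+
    then have "cscg_density Rn (w - of_real b) \<le> cscg_density Rn (w - of_real a)"
      "\<phi> ((cmod w)\<^sup>2) \<le> \<phi> ((cmod (of_real (a + b) - cnj w))\<^sup>2)"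
      unfolding cscg_density_le_iff[OF Rn] sq by (linarith, intro monoD[OF mono], linarith)
    then show ?thesis by (intro mult_nonpos_nonpos) simp_all
  qed
qed

lemma cscg_density_reflect:
  "cscg_density Rn (of_real (a + b) - cnj w - of_real b) = cscg_density Rn (w - of_real a)"
  by (simp add: cscg_density_def cmod_power2 power2_commute)

lemma
  fixes \<phi> :: "real \<Rightarrow> real"
  assumes Rn: "0 < Rn" and [measurable]: "\<phi> \<in> borel_measurable borel"
    and int: "integrable (cscg Rn) (\<lambda>z. \<phi> ((cmod (of_real c + z))\<^sup>2))"
  shows integrable_cscg_shift_lborel:
      "integrable lborel (\<lambda>w. cscg_density Rn (w - of_real c) * \<phi> ((cmod w)\<^sup>2))"
    and integral_cscg_shift_lborel:
      "(\<integral>z. \<phi> ((cmod (of_real c + z))\<^sup>2) \<partial>cscg Rn)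
       = (\<integral>w. cscg_density Rn (w - of_real c) * \<phi> ((cmod w)\<^sup>2) \<partial>lborel)"
proof -
  define f where "f z = cscg_density Rn z * \<phi> ((cmod (of_real c + z))\<^sup>2)" for z
  have [measurable]: "f \<in> borel_measurable borel" unfolding f_def by measurable
  have nn: "AE z in lborel. 0 \<le> cscg_density Rn z" using Rn by (simp add: cscg_density_nonneg)
  have m: "(+) (- complex_of_real c) \<in> measurable lborel borel" by simp
  have shift: "f (w - of_real c) = cscg_density Rn (w - of_real c) * \<phi> ((cmod w)\<^sup>2)" for w
    by (simp add: f_def)
  have "integrable lborel f"
    using int nn unfolding cscg_eq_density f_def by (subst (asm) integrable_density) auto
  then show "integrable lborel (\<lambda>w. cscg_density Rn (w - of_real c) * \<phi> ((cmod w)\<^sup>2))"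
    using integrable_distr_eq[OF m, of f] by (simp add: lborel_distr_plus shift)
  have "(\<integral>z. \<phi> ((cmod (of_real c + z))\<^sup>2) \<partial>cscg Rn) = (\<integral>z. f z \<partial>lborel)"
    using nn unfolding cscg_eq_density f_def by (subst integral_density) auto
  also have "\<dots> = (\<integral>w. f (w - of_real c) \<partial>lborel)"
    using integral_distr[OF m, of f] by (simp add: lborel_distr_plus)
  finally show "(\<integral>z. \<phi> ((cmod (of_real c + z))\<^sup>2) \<partial>cscg Rn)
      = (\<integral>w. cscg_density Rn (w - of_real c) * \<phi> ((cmod w)\<^sup>2) \<partial>lborel)"
    by (simp only: shift)
qed

lemma integral_cscg_shift_mono:
  fixes \<phi> :: "real \<Rightarrow> real" and a b :: real
  assumes Rn: "0 < Rn" and [measurable]: "\<phi> \<in> borel_measurable borel" and mono: "mono \<phi>"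
    and int_a: "integrable (cscg Rn) (\<lambda>z. \<phi> ((cmod (of_real a + z))\<^sup>2))"
    and int_b: "integrable (cscg Rn) (\<lambda>z. \<phi> ((cmod (of_real b + z))\<^sup>2))"
    and ab: "0 \<le> a" "a \<le> b"
  shows "(\<integral>z. \<phi> ((cmod (of_real a + z))\<^sup>2) \<partial>cscg Rn) \<le> (\<integral>z. \<phi> ((cmod (of_real b + z))\<^sup>2) \<partial>cscg Rn)"
proof -
  define t where "t = complex_of_real (a + b)"
  define I where "I c w = cscg_density Rn (w - of_real c) * \<phi> ((cmod w)\<^sup>2)" for c w
  define R where "R c w = cscg_density Rn (w - of_real c) * \<phi> ((cmod (t - cnj w))\<^sup>2)" for c w
  have [measurable]: "I c \<in> borel_measurable borel" for c
    unfolding I_def by measurable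
  have int_I: "integrable lborel (I a)" "integrable lborel (I b)"
    unfolding I_def using integrable_cscg_shift_lborel[OF Rn] int_a int_b by auto
  have reflect: "(\<lambda>w. I b (t - cnj w)) = R a" "(\<lambda>w. I a (t - cnj w)) = R b"
    using cscg_density_reflect[of Rn a b] cscg_density_reflect[of Rn b a]
    by (auto simp: I_def R_def t_def add.commute)
  have int_R: "integrable lborel (R a)" "integrable lborel (R b)"
    using int_I integrable_lborel_reflect_complex[of "I _" t] reflect by auto
  have "0 \<le> (\<integral>w. (I b w - I a w) + (R a w - R b w) \<partial>lborel)"
  proof (rule integral_nonneg_AE, rule AE_I2)
    fix w
    have "(I b w - I a w) + (R a w - R b w)
        = (cscg_density Rn (w - of_real b) - cscg_density Rn (w - of_real a)) *
          (\<phi> ((cmod w)\<^sup>2) - \<phi> ((cmod (of_real (a + b) - cnj w))\<^sup>2))"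
      unfolding I_def R_def t_def by (simp only: left_diff_distrib right_diff_distrib)
    then show "0 \<le> (I b w - I a w) + (R a w - R b w)"
      using cscg_density_shift_reflect_nonneg[OF Rn mono ab] by simp
  qed
  also have "\<dots> = (integral\<^sup>L lborel (I b) - integral\<^sup>L lborel (I a))
      + (integral\<^sup>L lborel (R a) - integral\<^sup>L lborel (R b))"
    using int_I int_R by simp
  also have "integral\<^sup>L lborel (R a) = integral\<^sup>L lborel (I b)"
    using integral_lborel_reflect_complex[of "I b" t] reflect by simp
  also have "integral\<^sup>L lborel (R b) = integral\<^sup>L lborel (I a)"
    using integral_lborel_reflect_complex[of "I a" t] reflect by simp
  finally have "integral\<^sup>L lborel (I a) \<le> integral\<^sup>L lborel (I b)"
    by simp
  then show ?thesis
    using integral_cscg_shift_lborel[OF Rn _ int_a] integral_cscg_shift_lborel[OF Rn _ int_b]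
    by (simp add: I_def[abs_def])
qed

section \<open>The expected excess over a threshold\<close>

definition excess_mean :: "real \<Rightarrow> real \<Rightarrow> real \<Rightarrow> real" where
  "excess_mean Rn \<theta> c = (\<integral>z. excess \<theta> ((cmod (of_real c + z))\<^sup>2) \<partial>cscg Rn)"

context
  fixes Rn \<theta> :: real
  assumes Rn: "0 < Rn" and \<theta>: "0 < \<theta>"
begin

interpretation cscg: prob_space "cscg Rn"
  by (rule prob_space_cscg[OF Rn])

lemma has_bochner_integral_cscg_excess:
  "has_bochner_integral (cscg Rn) (\<lambda>z. excess \<theta> ((cmod z)\<^sup>2)) (Rn * exp (- \<theta> / Rn))"
  using Rn by (intro has_bochner_integral_nn_integral nn_integral_cscg_excess[OF Rn \<theta>])
    (simp_all add: excess_nonneg)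

lemma integrable_cscg_norm_square: "integrable (cscg Rn) (\<lambda>z. (cmod z)\<^sup>2)"
proof (rule Bochner_Integration.integrable_bound)
  show "integrable (cscg Rn) (\<lambda>z. excess \<theta> ((cmod z)\<^sup>2) + \<theta>)"
    using has_bochner_integral_cscg_excess by (auto simp: has_bochner_integral_iff)
  show "AE z in cscg Rn. norm ((cmod z)\<^sup>2) \<le> norm (excess \<theta> ((cmod z)\<^sup>2) + \<theta>)"
    using \<theta> by (auto simp: excess_def indicator_def)
qed measurable

lemma integrable_cscg_shift_norm_square:
  "integrable (cscg Rn) (\<lambda>z. (cmod (of_real c + z))\<^sup>2)"
proof (rule Bochner_Integration.integrable_bound)
  show "integrable (cscg Rn) (\<lambda>z. 2 * c\<^sup>2 + 2 * (cmod z)\<^sup>2)"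
    using integrable_cscg_norm_square by simp
  show "AE z in cscg Rn. norm ((cmod (of_real c + z))\<^sup>2) \<le> norm (2 * c\<^sup>2 + 2 * (cmod z)\<^sup>2)"
  proof (rule AE_I2)
    fix z :: complex
    have "(cmod (of_real c + z))\<^sup>2 \<le> (\<bar>c\<bar> + cmod z)\<^sup>2"
      using norm_triangle_ineq[of "of_real c" z] by (intro power_mono) auto
    also have "\<dots> \<le> 2 * c\<^sup>2 + 2 * (cmod z)\<^sup>2"
      using sum_squares_ge_zero[of "\<bar>c\<bar> - cmod z" 0] by (simp add: power2_eq_square algebra_simps)
    finally show "norm ((cmod (of_real c + z))\<^sup>2) \<le> norm (2 * c\<^sup>2 + 2 * (cmod z)\<^sup>2)" by simp
  qed
qed measurable

lemma integrable_cscg_Re: "integrable (cscg Rn) Re"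
proof (rule Bochner_Integration.integrable_bound)
  show "integrable (cscg Rn) (\<lambda>z. 1 + (cmod z)\<^sup>2)"
    using integrable_cscg_norm_square by simp
  show "AE z in cscg Rn. norm (Re z) \<le> norm (1 + (cmod z)\<^sup>2)"
  proof (rule AE_I2)
    fix z :: complex
    have "2 * cmod z \<le> 1 + (cmod z)\<^sup>2"
      using sum_squares_ge_zero[of "cmod z - 1" 0] by (simp add: power2_eq_square algebra_simps)
    then show "norm (Re z) \<le> norm (1 + (cmod z)\<^sup>2)"
      using abs_Re_le_cmod[of z] norm_ge_zero[of z] by simp
  qed
qed simp

lemma integral_cscg_Re: "(\<integral>z. Re z \<partial>cscg Rn) = 0"
proof -
  have "(\<integral>z. Re z \<partial>cscg Rn) = (\<integral>z. cscg_density Rn z * Re z \<partial>lborel)"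
    using Rn unfolding cscg_eq_density by (subst integral_density) (auto simp: cscg_density_nonneg)
  also have "\<dots> = (\<integral>w. cscg_density Rn (0 - cnj w) * Re (0 - cnj w) \<partial>lborel)"
    by (rule integral_lborel_reflect_complex) simp
  also have "\<dots> = - (\<integral>z. cscg_density Rn z * Re z \<partial>lborel)"
    by (simp add: cscg_density_def)
  finally show ?thesis
    using \<open>(\<integral>z. Re z \<partial>cscg Rn) = _\<close> by simp
qed

lemma integral_cscg_shift_norm_square:
  "(\<integral>z. (cmod (of_real c + z))\<^sup>2 \<partial>cscg Rn) = c\<^sup>2 + (\<integral>z. (cmod z)\<^sup>2 \<partial>cscg Rn)"
proof -
  have "(cmod (of_real c + z))\<^sup>2 = c\<^sup>2 + (2 * c * Re z + (cmod z)\<^sup>2)" for z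
    unfolding cmod_power2 by (simp add: power2_eq_square algebra_simps)
  then show ?thesis
    using integrable_cscg_Re integrable_cscg_norm_square
    by (simp add: cscg.prob_space integral_cscg_Re)
qed

lemma integrable_cscg_shift_excess:
  "integrable (cscg Rn) (\<lambda>z. excess \<theta> ((cmod (of_real c + z))\<^sup>2))"
proof (rule Bochner_Integration.integrable_bound)
  show "AE z in cscg Rn. norm (excess \<theta> ((cmod (of_real c + z))\<^sup>2)) \<le> norm ((cmod (of_real c + z))\<^sup>2)"
    using \<theta> by (auto simp: excess_def indicator_def)
qed (fact integrable_cscg_shift_norm_square, measurable)

lemma integrable_cscg_shift_min:
  "integrable (cscg Rn) (\<lambda>z. min ((cmod (of_real c + z))\<^sup>2) \<theta>)"
  by (rule cscg.integrable_const_bound[where B=\<theta>]) (use \<theta> in auto)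

lemma excess_mean_0: "excess_mean Rn \<theta> 0 = Rn * exp (- \<theta> / Rn)"
  using has_bochner_integral_cscg_excess by (simp add: excess_mean_def has_bochner_integral_iff)

lemma excess_mean_mono: "0 \<le> a \<Longrightarrow> a \<le> b \<Longrightarrow> excess_mean Rn \<theta> a \<le> excess_mean Rn \<theta> b"
  unfolding excess_mean_def
  by (rule integral_cscg_shift_mono[OF Rn _ mono_excess integrable_cscg_shift_excess
      integrable_cscg_shift_excess]) auto

lemma excess_mean_eq:
  "excess_mean Rn \<theta> c = c\<^sup>2 + (\<integral>z. (cmod z)\<^sup>2 \<partial>cscg Rn) - (\<integral>z. min ((cmod (of_real c + z))\<^sup>2) \<theta> \<partial>cscg Rn)"
  using integrable_cscg_shift_norm_square integrable_cscg_shift_min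
  by (simp add: excess_mean_def excess_eq_diff_min integral_cscg_shift_norm_square)

lemma excess_mean_diff_le:
  assumes "0 \<le> a" "a \<le> b"
  shows "excess_mean Rn \<theta> b - excess_mean Rn \<theta> a \<le> b\<^sup>2 - a\<^sup>2"
proof -
  have "mono (\<lambda>y::real. min y \<theta>)"
    by (rule monoI) auto
  then show ?thesis
    using integral_cscg_shift_mono[OF Rn _ _ integrable_cscg_shift_min integrable_cscg_shift_min assms]
    by (simp add: excess_mean_eq)
qed

lemma excess_mean_ge: "c\<^sup>2 - \<theta> \<le> excess_mean Rn \<theta> c"
proof -
  have "(\<integral>z. (cmod (of_real c + z))\<^sup>2 - \<theta> \<partial>cscg Rn) \<le> excess_mean Rn \<theta> c"
    unfolding excess_mean_def
    by (rule integral_mono[OF _ integrable_cscg_shift_excess])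
      (auto simp: integrable_cscg_shift_norm_square excess_def indicator_def)
  moreover have "(\<integral>z. (cmod (of_real c + z))\<^sup>2 - \<theta> \<partial>cscg Rn) = c\<^sup>2 + (\<integral>z. (cmod z)\<^sup>2 \<partial>cscg Rn) - \<theta>"
    using integrable_cscg_shift_norm_square
    by (simp add: integral_cscg_shift_norm_square cscg.prob_space)
  moreover have "0 \<le> (\<integral>z. (cmod z)\<^sup>2 \<partial>cscg Rn)"
    by simp
  ultimately show ?thesis
    by linarith
qed

end

lemma J0_eq_excess_mean:
  "J0 tau cr Rn \<theta> x = (1 - tau) * excess_mean Rn \<theta> (sqrt (cr * x)) - \<theta> * tau"
proof -
  have m: "(\<lambda>z. (cmod (of_real (sqrt (cr * x)) + z))\<^sup>2) \<in> measurable (cscg Rn) borel"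
    by measurable
  have "(LINT y:{\<theta><..}|G_law cr Rn x. (y - \<theta>)) = (\<integral>y. excess \<theta> y \<partial>G_law cr Rn x)"
    by (simp add: set_lebesgue_integral_def excess_def)
  also have "\<dots> = excess_mean Rn \<theta> (sqrt (cr * x))"
    unfolding G_law_def excess_mean_def by (rule integral_distr[OF m]) simp
  finally show ?thesis
    by (simp add: J0_def)
qed

context
  fixes tau cr Rn \<theta> :: real
  assumes tau: "0 < tau" "tau < 1" and cr: "0 < cr" and Rn: "0 < Rn" and \<theta>: "0 < \<theta>"
begin

lemma J0_at_0: "J0 tau cr Rn \<theta> 0 = (1 - tau) * (Rn * exp (- \<theta> / Rn)) - \<theta> * tau"
  by (simp add: J0_eq_excess_mean excess_mean_0[OF Rn \<theta>])

lemma J0_mono_on: "mono_on {0..} (J0 tau cr Rn \<theta>)"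
proof (rule mono_onI)
  fix x y :: real
  assume "x \<in> {0..}" "y \<in> {0..}" "x \<le> y"
  then show "J0 tau cr Rn \<theta> x \<le> J0 tau cr Rn \<theta> y"
    using excess_mean_mono[OF Rn \<theta>, of "sqrt (cr * x)" "sqrt (cr * y)"] cr tau
    by (simp add: J0_eq_excess_mean mult_left_mono)
qed

lemma J0_diff_le:
  assumes "0 \<le> x" "x \<le> y"
  shows "J0 tau cr Rn \<theta> y - J0 tau cr Rn \<theta> x \<le> (1 - tau) * cr * (y - x)"
proof -
  have "excess_mean Rn \<theta> (sqrt (cr * y)) - excess_mean Rn \<theta> (sqrt (cr * x)) \<le> cr * y - cr * x"
    using excess_mean_diff_le[OF Rn \<theta>, of "sqrt (cr * x)" "sqrt (cr * y)"] assms cr by simp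
  then have "(1 - tau) * (excess_mean Rn \<theta> (sqrt (cr * y)) - excess_mean Rn \<theta> (sqrt (cr * x)))
      \<le> (1 - tau) * (cr * y - cr * x)"
    using tau by (intro mult_left_mono) simp_all
  then show ?thesis
    by (simp add: J0_eq_excess_mean algebra_simps)
qed

lemma J0_ge: "0 \<le> x \<Longrightarrow> (1 - tau) * (cr * x - \<theta>) - \<theta> * tau \<le> J0 tau cr Rn \<theta> x"
  using excess_mean_ge[OF Rn \<theta>, of "sqrt (cr * x)"] cr tau mult_left_mono[of _ _ "1 - tau"]
  by (simp add: J0_eq_excess_mean)

lemma J0_tendsto_at_right_0: "(J0 tau cr Rn \<theta> \<longlongrightarrow> J0 tau cr Rn \<theta> 0) (at_right 0)"
proof (rule tendsto_sandwich)
  have nonneg: "eventually (\<lambda>x::real. 0 \<le> x) (at_right 0)"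
    unfolding eventually_at_filter by simp
  show "eventually (\<lambda>x. J0 tau cr Rn \<theta> 0 \<le> J0 tau cr Rn \<theta> x) (at_right 0)"
    using nonneg by eventually_elim (auto intro: mono_onD[OF J0_mono_on])
  show "eventually (\<lambda>x. J0 tau cr Rn \<theta> x \<le> J0 tau cr Rn \<theta> 0 + (1 - tau) * cr * x) (at_right 0)"
    using nonneg by eventually_elim (use J0_diff_le[of 0] in fastforce)
  show "((\<lambda>x. J0 tau cr Rn \<theta> 0 + (1 - tau) * cr * x) \<longlongrightarrow> J0 tau cr Rn \<theta> 0) (at_right 0)"
    by (auto intro!: tendsto_eq_intros)
qed simp

lemma J0_filterlim_at_top: "filterlim (J0 tau cr Rn \<theta>) at_top at_top"
proof (rule filterlim_at_top_mono)
  show "filterlim (\<lambda>x. - \<theta> + ((1 - tau) * cr) * x) at_top at_top"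
    using tau cr
    by (intro filterlim_tendsto_add_at_top[OF tendsto_const]
        filterlim_tendsto_pos_mult_at_top[OF tendsto_const _ filterlim_ident]) simp
  show "eventually (\<lambda>x. - \<theta> + ((1 - tau) * cr) * x \<le> J0 tau cr Rn \<theta> x) at_top"
    using eventually_ge_at_top[of "0::real"]
    by eventually_elim (use J0_ge in \<open>simp add: algebra_simps\<close>)
qed

lemma q_fun_antimono_on:
  assumes "(1 - tau) * cr \<le> 1"
  shows "antimono_on {0..} (q_fun tau cr Rn \<theta>)"
proof (rule monotone_onI)
  fix x y :: real
  assume "x \<in> {0..}" "y \<in> {0..}" "x \<le> y"
  then show "q_fun tau cr Rn \<theta> y \<le> q_fun tau cr Rn \<theta> x"
    using J0_diff_le[of x y] assms mult_right_mono[of "(1 - tau) * cr" 1 "y - x"]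
    by (simp add: q_fun_def)
qed

lemma q_fun_tendsto_at_right_0:
  "(q_fun tau cr Rn \<theta> \<longlongrightarrow> J0 tau cr Rn \<theta> 0 + \<theta>) (at_right 0)"
  unfolding q_fun_def[abs_def]
  using J0_tendsto_at_right_0 by (auto intro!: tendsto_eq_intros)

lemma q_fun_filterlim_at_bot:
  assumes "(1 - tau) * cr < 1"
  shows "filterlim (q_fun tau cr Rn \<theta>) at_bot at_top"
proof (rule filterlim_at_bot_mono)
  show "filterlim (\<lambda>x. (J0 tau cr Rn \<theta> 0 + \<theta>) + ((1 - tau) * cr - 1) * x) at_bot at_top"
    using assms
    by (subst filterlim_tendsto_add_at_bot_iff[OF tendsto_const])
      (intro filterlim_tendsto_neg_mult_at_bot[OF tendsto_const _ filterlim_ident], simp)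
  show "eventually (\<lambda>x. q_fun tau cr Rn \<theta> x \<le> (J0 tau cr Rn \<theta> 0 + \<theta>) + ((1 - tau) * cr - 1) * x) at_top"
    using eventually_ge_at_top[of "0::real"]
    by eventually_elim (use J0_diff_le[of 0] in \<open>simp add: q_fun_def algebra_simps\<close>)
qed

end

theorem lemma2:
  fixes tau cr Rn \<theta> :: real
  assumes tau: "0 < tau" "tau < 1"
    and cr: "0 < cr" and Rn: "0 < Rn"
    and \<theta>: "0 < \<theta>"
  shows "mono_on {0..} (J0 tau cr Rn \<theta>)
       \<and> filterlim (J0 tau cr Rn \<theta>) at_top at_top
       \<and> (Rn / \<theta> * exp (- \<theta> / Rn) < tau / (1 - tau) \<longrightarrow>
            (\<exists>L. (J0 tau cr Rn \<theta> \<longlongrightarrow> L) (at_right 0) \<and> L < 0))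
       \<and> (cr < 1 / (1 - tau) \<longrightarrow>
            antimono_on {0..} (q_fun tau cr Rn \<theta>)
          \<and> (\<exists>L. (q_fun tau cr Rn \<theta> \<longlongrightarrow> L) (at_right 0) \<and> L > 0)
          \<and> filterlim (q_fun tau cr Rn \<theta>) at_bot at_top)"
proof -
  define L where "L = (1 - tau) * (Rn * exp (- \<theta> / Rn)) - \<theta> * tau"
  have J_lim: "(J0 tau cr Rn \<theta> \<longlongrightarrow> L) (at_right 0)"
    and q_lim: "(q_fun tau cr Rn \<theta> \<longlongrightarrow> L + \<theta>) (at_right 0)"
    using J0_tendsto_at_right_0[OF assms] q_fun_tendsto_at_right_0[OF assms]
    by (simp_all add: J0_at_0[OF assms] L_def)
  have L_neg: "L < 0" if "Rn / \<theta> * exp (- \<theta> / Rn) < tau / (1 - tau)"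
    using that tau \<theta> by (simp add: L_def field_simps)
  have "0 < (1 - tau) * (Rn * exp (- \<theta> / Rn) + \<theta>)"
    using tau Rn \<theta> by (intro mult_pos_pos add_pos_pos) simp_all
  then have L_\<theta>_pos: "0 < L + \<theta>"
    by (simp add: L_def algebra_simps)
  have slope: "(1 - tau) * cr < 1" if "cr < 1 / (1 - tau)"
    using that tau by (simp add: field_simps)
  show ?thesis
    using J_lim q_lim L_neg L_\<theta>_pos slope J0_mono_on[OF assms] J0_filterlim_at_top[OF assms]
      q_fun_antimono_on[OF assms less_imp_le] q_fun_filterlim_at_bot[OF assms]
    by blast
qed

end
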